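(* Consider the Decaying-$\epsilon$-FOCuS procedure (described in the context) on $M>1$ streams with threshold $\lambda>0$, where stream 1 has a change-point at $\nu=0$ (every observation of stream 1 is $\mathcal{N}(\mu_1,1)$ with $\mu_1\ne0$, all other observations $\mathcal{N}(0,1)$). Let $\hat\nu_{\max}=\sup_{0\le t<\tau}\hat\nu_t$, and let $t_0$ be the smallest time step such that for all $t>t_0$, $T_t^{(1)}>\max_{m\in[M]\setminus\{1\}}T_t^{(m)}$. Then $$\mathbb{E}_{M,0}[\hat\nu_{\max}]\le \mathbb{E}_{M,0}[t_0]+M\,\mathbb{E}_{1,0}\Big[\sup_{t\ge0}\hat\nu_t\Big],$$ where $\mathbb{E}_{1,0}$ refers to the single-stream case $M=1$ (a single stream all of whose observations are i.i.d. $\mathcal{N}(\mu_1,1)$, with $\hat\nu_t$ its GLR change-point estimate).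
   Context: Setting: there are $M$ independent data streams. At each time $t=1,2,\dots$ an agent selects one stream $A_t\in\{1,\dots,M\}$ and observes one value $X_t\in\mathbb{R}$ from it. The $i$-th observation taken from stream $m$ is denoted $X_i^{(m)}$. Pre-change observations are $\mathcal{N}(0,1)$. Stream 1 has a change-point $\nu$: if $A_t=1$ and $t>\nu$ then $X_t\sim\mathcal{N}(\mu_1,1)$ with $\mu_1\neq0$; otherwise $X_t\sim\mathcal{N}(0,1)$; observations are conditionally independent given the selections. $\mathbb{P}_{M,\nu},\mathbb{E}_{M,\nu}$ denote probability/expectation for $M$ streams with change at $\nu$ in stream 1. $\mathcal{F}_t=\sigma(A_1,X_1,\dots,A_t,X_t)$. The sampling process and statistics are defined for all $t\ge 0$. Decaying-$\epsilon$-FOCuS: let $N_t^{(m)}$ be the number of times stream $m$ was selected up to and including time $t$. The local GLR statistic is $T_t^{(m)}=\max_{0\le k<N_t^{(m)}}\frac{(\sum_{i=k+1}^{N_t^{(m)}}X_i^{(m)})^2}{2(N_t^{(m)}-k)}$ (and $T_t^{(m)}=0$ if $N_t^{(m)}=0$); $T_t=\max_m T_t^{(m)}$ and $M_t=\arg\max_m T_t^{(m)}$. The local change-point estimate $\hat\nu_t^{(m)}$ is the time at which stream $m$'s $\hat k$-th observation was taken, where $\hat k$ is the maximizing index $k$ in $T_t^{(m)}$ (time $0$ if $\hat k=0$ or $N_t^{(m)}=0$); the global estimate is $\hat\nu_t=\hat\nu_t^{(M_t)}$; ties are broken uniformly at random. Initially $\hat\nu_0=0$, $M_0$ uniform on $[M]$.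 At time $t$, set $\epsilon_t=\min\{1, M/\max(1,t-\hat\nu_{t-1})^{1/3}\}$, draw $G_t\sim\mathrm{Bernoulli}(\epsilon_t)$ (conditionally on $\mathcal{F}_{t-1}$); if $G_t=1$ choose $A_t$ uniformly from $[M]$, otherwise $A_t=M_{t-1}$; then observe $X_t$ and update the statistics. The procedure stops at $\tau=\inf\{t\ge 1: T_t\ge\lambda\}$. *)

theory Defs
  imports "HOL-Probability.Probability"
begin

text \<open>Coordinates of the underlying sample space.
  Obs m i : the i-th observation (i >= 1) taken from stream m (m in 1..M);
  Gc t    : uniform variable used for the exploration coin G_t at time t;
  Uc t    : uniform variable used for the uniform stream choice at time t;
  Wc t    : uniform variable used for uniform tie-breaking of M_t.\<close>
datatype coord = Obs nat nat | Gc nat | Uc nat | Wc nat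

definition coord_dist :: "real \<Rightarrow> coord \<Rightarrow> real measure" where
  "coord_dist mu c = (case c of
      Obs m i \<Rightarrow> density lborel (normal_density (if m = 1 then mu else 0) 1)
    | _ \<Rightarrow> uniform_measure lborel {0..1})"

definition focus_space :: "real \<Rightarrow> (coord \<Rightarrow> real) measure" where
  "focus_space mu = (\<Pi>\<^sub>M c\<in>UNIV. coord_dist mu c)"

text \<open>A history h is the list [A_1, ..., A_t] of selected streams.\<close>
definition Ncount :: "nat list \<Rightarrow> nat \<Rightarrow> nat" where
  "Ncount h m = length (filter (\<lambda>a. a = m) h)"

definition glr_val :: "(coord \<Rightarrow> real) \<Rightarrow> nat \<Rightarrow> nat \<Rightarrow> nat \<Rightarrow> real" where
  "glr_val \<omega> m N k = (\<Sum>i = k+1..N. \<omega> (Obs m i))^2 / (2 * real (N - k))"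

definition Tloc :: "(coord \<Rightarrow> real) \<Rightarrow> nat list \<Rightarrow> nat \<Rightarrow> real" where
  "Tloc \<omega> h m = (let N = Ncount h m in
     if N = 0 then 0 else Max (glr_val \<omega> m N ` {0..<N}))"

text \<open>Maximising index (ties among k are a null event; least maximiser chosen).\<close>
definition khat :: "(coord \<Rightarrow> real) \<Rightarrow> nat list \<Rightarrow> nat \<Rightarrow> nat" where
  "khat \<omega> h m = (let N = Ncount h m in
     if N = 0 then 0 else (LEAST k. k < N \<and> glr_val \<omega> m N k = Tloc \<omega> h m))"

text \<open>Time (1-based) at which the k-th observation (k >= 1) of stream m was taken.\<close>
definition obs_time :: "nat list \<Rightarrow> nat \<Rightarrow> nat \<Rightarrow> nat" where
  "obs_time h m k = filter (\<lambda>j. h ! (j - 1) = m) [1..<length h + 1] ! (k - 1)"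

definition nuhat_loc :: "(coord \<Rightarrow> real) \<Rightarrow> nat list \<Rightarrow> nat \<Rightarrow> nat" where
  "nuhat_loc \<omega> h m = (let k = khat \<omega> h m in if k = 0 then 0 else obs_time h m k)"

definition Tglob :: "nat \<Rightarrow> (coord \<Rightarrow> real) \<Rightarrow> nat list \<Rightarrow> real" where
  "Tglob M \<omega> h = Max (Tloc \<omega> h ` {1..M})"

text \<open>Uniform choice from a finite nonempty set S of naturals driven by w uniform on [0,1].\<close>
definition pick_unif :: "nat set \<Rightarrow> real \<Rightarrow> nat" where
  "pick_unif S w = sorted_list_of_set S ! min (card S - 1) (nat \<lfloor>w * real (card S)\<rfloor>)"

text \<open>M_t: argmax stream at time t (history h of length t), ties broken uniformly.\<close>
definition Mt :: "nat \<Rightarrow> (coord \<Rightarrow> real) \<Rightarrow> nat list \<Rightarrow> nat \<Rightarrow> nat" where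
  "Mt M \<omega> h t = pick_unif {m \<in> {1..M}. Tloc \<omega> h m = Tglob M \<omega> h} (\<omega> (Wc t))"

definition nuhat_glob :: "nat \<Rightarrow> (coord \<Rightarrow> real) \<Rightarrow> nat list \<Rightarrow> nat \<Rightarrow> nat" where
  "nuhat_glob M \<omega> h t = nuhat_loc \<omega> h (Mt M \<omega> h t)"

definition eps :: "nat \<Rightarrow> nat \<Rightarrow> nat \<Rightarrow> real" where
  "eps M t nu = min 1 (real M / (max 1 (real t - real nu)) powr (1/3))"

text \<open>Selection A_t at time t >= 1 given the history h = [A_1..A_{t-1}].\<close>
definition select :: "nat \<Rightarrow> (coord \<Rightarrow> real) \<Rightarrow> nat list \<Rightarrow> nat \<Rightarrow> nat" where
  "select M \<omega> h t =
     (if \<omega> (Gc t) < eps M t (nuhat_glob M \<omega> h (t - 1))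
      then 1 + min (M - 1) (nat \<lfloor>\<omega> (Uc t) * real M\<rfloor>)
      else Mt M \<omega> h (t - 1))"

fun hist :: "nat \<Rightarrow> (coord \<Rightarrow> real) \<Rightarrow> nat \<Rightarrow> nat list" where
  "hist M \<omega> 0 = []"
| "hist M \<omega> (Suc t) = hist M \<omega> t @ [select M \<omega> (hist M \<omega> t) (Suc t)]"

definition T_t :: "nat \<Rightarrow> (coord \<Rightarrow> real) \<Rightarrow> nat \<Rightarrow> real" where
  "T_t M \<omega> t = Tglob M \<omega> (hist M \<omega> t)"

definition T_loc_t :: "nat \<Rightarrow> (coord \<Rightarrow> real) \<Rightarrow> nat \<Rightarrow> nat \<Rightarrow> real" where
  "T_loc_t M \<omega> t m = Tloc \<omega> (hist M \<omega> t) m"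

definition nuhat_t :: "nat \<Rightarrow> (coord \<Rightarrow> real) \<Rightarrow> nat \<Rightarrow> nat" where
  "nuhat_t M \<omega> t = nuhat_glob M \<omega> (hist M \<omega> t) t"

text \<open>sup over 0 <= t < tau, where tau = inf{t >= 1 : T_t >= lam} (possibly infinite).\<close>
definition nuhat_max :: "nat \<Rightarrow> real \<Rightarrow> (coord \<Rightarrow> real) \<Rightarrow> ennreal" where
  "nuhat_max M lam \<omega> =
     (SUP t \<in> {t. \<forall>s. 1 \<le> s \<and> s \<le> t \<longrightarrow> T_t M \<omega> s < lam}. ennreal (real (nuhat_t M \<omega> t)))"

definition stream1_leads_after :: "nat \<Rightarrow> (coord \<Rightarrow> real) \<Rightarrow> nat \<Rightarrow> bool" where
  "stream1_leads_after M \<omega> n =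
     (\<forall>t > n. T_loc_t M \<omega> t 1 > Max ((T_loc_t M \<omega> t) ` {2..M}))"

definition t0 :: "nat \<Rightarrow> (coord \<Rightarrow> real) \<Rightarrow> ennreal" where
  "t0 M \<omega> = (if \<exists>n. stream1_leads_after M \<omega> n
              then of_nat (LEAST n. stream1_leads_after M \<omega> n) else \<infinity>)"

end

theory Submission
  imports Defs
begin

text \<open>
  Couple the \<open>M\<close>-stream run with the single-stream run on the same observations of stream 1,
  and let \<open>K\<close> be the largest single-stream estimate. After \<open>t\<^sub>0\<close> stream 1 leads, so \<open>M\<^sub>t = 1\<close> and
  the estimate is the time \<open>s\<close> of stream 1's \<open>k\<close>-th observation, where \<open>k \<le> K\<close> by the coupling.
  Of the steps between \<open>t\<^sub>0\<close> and \<open>s\<close>, at most \<open>k\<close> sample stream 1; every other one is an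
  exploration, triggered while stream 1 has fewer than \<open>K\<close> observations, that lands on another
  stream. Whether such an early exploration is triggered does not depend on the uniform stream
  choice made at that step, so in expectation the explorations landing on other streams are
  \<open>M - 1\<close> times those landing on stream 1; and the latter are at most \<open>K\<close>, since each adds an
  observation to stream 1 while it has fewer than \<open>K\<close>.
\<close>

section \<open>Measurability\<close>

lemma sets_coord_dist [simp, measurable_cong]: "sets (coord_dist mu c) = sets borel"
  by (cases c) (auto simp: coord_dist_def)

lemma space_coord_dist [simp]: "space (coord_dist mu c) = UNIV"
  by (cases c) (auto simp: coord_dist_def)

lemma prob_space_coord_dist: "prob_space (coord_dist mu c)"
  by (cases c) (auto simp: coord_dist_def prob_space_normal_density intro!: prob_space_uniform_measure)

lemma space_focus_space [simp]: "space (focus_space mu) = UNIV"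
  by (simp add: focus_space_def space_PiM PiE_def)

lemma UNIV_in_sets_focus_space [simp]: "UNIV \<in> sets (focus_space mu)"
  using sets.top[of "focus_space mu"] by simp

lemma measurable_coord [measurable]: "(\<lambda>\<omega>. \<omega> c) \<in> borel_measurable (focus_space mu)"
  unfolding focus_space_def by measurable

lemma measurable_compose_count_space_UNIV:
  assumes "f \<in> N \<rightarrow>\<^sub>M count_space UNIV" and "space M = UNIV"
  shows "(\<lambda>x. g (f x)) \<in> N \<rightarrow>\<^sub>M M"
  using assms by (intro measurable_compose[OF assms(1)]) simp

lemma measurable_glr_val [measurable]: "(\<lambda>\<omega>. glr_val \<omega> m N k) \<in> borel_measurable (focus_space mu)"
  unfolding glr_val_def by measurable

lemma measurable_Tloc [measurable]: "(\<lambda>\<omega>. Tloc \<omega> h m) \<in> borel_measurable (focus_space mu)"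
proof -
  have "(\<lambda>\<omega>. Max ((\<lambda>k. glr_val \<omega> m (Ncount h m) k) ` {0..<Ncount h m})) \<in> borel_measurable (focus_space mu)"
    by measurable
  then show ?thesis by (simp add: Tloc_def Let_def)
qed

lemma measurable_khat [measurable]: "(\<lambda>\<omega>. khat \<omega> h m) \<in> focus_space mu \<rightarrow>\<^sub>M count_space UNIV"
proof -
  let ?N = "Ncount h m"
  have "Measurable.pred (focus_space mu) (\<lambda>\<omega>. k < ?N \<and> glr_val \<omega> m ?N k = Tloc \<omega> h m)" for k
  proof (rule pred_intros_conj1')
    show "Measurable.pred (focus_space mu) (\<lambda>\<omega>. glr_val \<omega> m ?N k = Tloc \<omega> h m)"
      unfolding pred_def by (rule borel_measurable_eq[OF measurable_glr_val measurable_Tloc])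
  qed
  then have least: "(\<lambda>\<omega>. LEAST k. k < ?N \<and> glr_val \<omega> m ?N k = Tloc \<omega> h m)
                      \<in> focus_space mu \<rightarrow>\<^sub>M count_space UNIV"
    by (rule measurable_Least)
  show ?thesis
    unfolding khat_def Let_def by (rule measurable_If[OF _ least]) (auto intro: measurable_const)
qed

lemma measurable_nuhat_loc [measurable]:
  "(\<lambda>\<omega>. nuhat_loc \<omega> h m) \<in> focus_space mu \<rightarrow>\<^sub>M count_space UNIV"
  unfolding nuhat_loc_def Let_def by (rule measurable_compose_count_space_UNIV[OF measurable_khat]) simp

lemma measurable_Tglob [measurable]: "(\<lambda>\<omega>. Tglob M \<omega> h) \<in> borel_measurable (focus_space mu)"
  unfolding Tglob_def by (rule borel_measurable_Max) (auto intro: measurable_Tloc)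

lemma measurable_pick_unif:
  assumes "f \<in> borel_measurable N"
  shows "(\<lambda>x. pick_unif S (f x)) \<in> N \<rightarrow>\<^sub>M count_space UNIV"
proof -
  have "(\<lambda>x. f x * real (card S)) \<in> borel_measurable N"
    using assms by (rule borel_measurable_times) simp
  then have "(\<lambda>x. \<lfloor>f x * real (card S)\<rfloor>) \<in> N \<rightarrow>\<^sub>M count_space UNIV"
    by (rule measurable_compose[OF _ measurable_real_floor])
  then show ?thesis
    unfolding pick_unif_def by (rule measurable_compose_count_space_UNIV) simp
qed

lemma measurable_Mt [measurable]: "(\<lambda>\<omega>. Mt M \<omega> h t) \<in> focus_space mu \<rightarrow>\<^sub>M count_space UNIV"
proof -
  let ?P = "focus_space mu"
  let ?S = "\<lambda>\<omega>. {m \<in> {1..M}. Tloc \<omega> h m = Tglob M \<omega> h}"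
  have leader_sets: "{\<omega> \<in> space ?P. Tloc \<omega> h m = Tglob M \<omega> h} \<in> sets ?P" for m
    by (rule borel_measurable_eq[OF measurable_Tloc measurable_Tglob])
  have "?S -` {A} \<inter> space ?P \<in> sets ?P" if "A \<subseteq> {1..M}" for A
  proof -
    have "?S -` {A} \<inter> space ?P = {\<omega> \<in> space ?P. \<forall>m\<in>{1..M}. (Tloc \<omega> h m = Tglob M \<omega> h) = (m \<in> A)}"
      using subsetD[OF that] by (auto simp del: atLeastAtMost_iff)
    also have "\<dots> \<in> sets ?P"
    proof (rule sets.sets_Collect_finite_All)
      fix m
      show "{\<omega> \<in> space ?P. (Tloc \<omega> h m = Tglob M \<omega> h) = (m \<in> A)} \<in> sets ?P"
      proof (cases "m \<in> A")
        case True
        then show ?thesis using leader_sets[of m] by simp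
      next
        case False
        then have "{\<omega> \<in> space ?P. (Tloc \<omega> h m = Tglob M \<omega> h) = (m \<in> A)}
                     = space ?P - {\<omega> \<in> space ?P. Tloc \<omega> h m = Tglob M \<omega> h}"
          by auto
        then show ?thesis using leader_sets[of m] by (metis sets.compl_sets)
      qed
    qed simp
    finally show ?thesis .
  qed
  then have "?S \<in> ?P \<rightarrow>\<^sub>M count_space (Pow {1..M})"
    by (subst measurable_count_space_eq_countable) (auto intro: countable_finite)
  then have "(\<lambda>\<omega>. (\<lambda>S \<omega>. pick_unif S (\<omega> (Wc t))) (?S \<omega>) \<omega>) \<in> ?P \<rightarrow>\<^sub>M count_space UNIV"
    by (rule measurable_compose_countable'[rotated])
       (auto intro: measurable_pick_unif measurable_coord countable_finite)
  then show ?thesis unfolding Mt_def by simp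
qed

lemma measurable_nuhat_glob [measurable]:
  "(\<lambda>\<omega>. nuhat_glob M \<omega> h t) \<in> focus_space mu \<rightarrow>\<^sub>M count_space UNIV"
  unfolding nuhat_glob_def
  by (rule measurable_compose_countable[where g="\<lambda>\<omega>. Mt M \<omega> h t", OF measurable_nuhat_loc measurable_Mt])

lemma measurable_select [measurable]: "(\<lambda>\<omega>. select M \<omega> h t) \<in> focus_space mu \<rightarrow>\<^sub>M count_space UNIV"
proof -
  have "(\<lambda>\<omega>. eps M t (nuhat_glob M \<omega> h (t - 1))) \<in> borel_measurable (focus_space mu)"
    by (rule measurable_compose_count_space_UNIV[OF measurable_nuhat_glob]) simp
  then have explore: "{\<omega>. \<omega> (Gc t) < eps M t (nuhat_glob M \<omega> h (t - 1))} \<in> sets (focus_space mu)"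
    using borel_measurable_less[OF measurable_coord] by fastforce
  have "(\<lambda>\<omega>. \<lfloor>\<omega> (Uc t) * real M\<rfloor>) \<in> focus_space mu \<rightarrow>\<^sub>M count_space UNIV"
    by measurable
  then have "(\<lambda>\<omega>. 1 + min (M - 1) (nat \<lfloor>\<omega> (Uc t) * real M\<rfloor>)) \<in> focus_space mu \<rightarrow>\<^sub>M count_space UNIV"
    by (rule measurable_compose_count_space_UNIV) simp
  with explore show ?thesis
    unfolding select_def by (intro measurable_If measurable_Mt) simp_all
qed

lemma measurable_hist [measurable]: "(\<lambda>\<omega>. hist M \<omega> t) \<in> focus_space mu \<rightarrow>\<^sub>M count_space UNIV"
proof (induction t)
  case 0
  show ?case by (simp del: space_focus_space)
next
  case (Suc t)
  have "(\<lambda>\<omega>. (\<lambda>h \<omega>. h @ [select M \<omega> h (Suc t)]) (hist M \<omega> t) \<omega>) \<in> focus_space mu \<rightarrow>\<^sub>M count_space UNIV"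
    by (rule measurable_compose_countable[OF _ Suc])
       (rule measurable_compose_count_space_UNIV[OF measurable_select], simp)
  then show ?case by simp
qed

lemma measurable_nuhat_t [measurable]: "(\<lambda>\<omega>. nuhat_t M \<omega> t) \<in> focus_space mu \<rightarrow>\<^sub>M count_space UNIV"
  unfolding nuhat_t_def
  by (rule measurable_compose_countable[where g="\<lambda>\<omega>. hist M \<omega> t", OF measurable_nuhat_glob measurable_hist])

lemma measurable_T_loc_t [measurable]: "(\<lambda>\<omega>. T_loc_t M \<omega> t m) \<in> borel_measurable (focus_space mu)"
  unfolding T_loc_t_def
  by (rule measurable_compose_countable[where g="\<lambda>\<omega>. hist M \<omega> t", OF measurable_Tloc measurable_hist])

lemma sets_stream1_leads_after: "{\<omega>. stream1_leads_after M \<omega> n} \<in> sets (focus_space mu)"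
proof -
  have "(\<lambda>\<omega>. Max ((\<lambda>m. T_loc_t M \<omega> t m) ` {2..M})) \<in> borel_measurable (focus_space mu)" for t
    by (rule borel_measurable_Max) auto
  then have "{\<omega>. Max (T_loc_t M \<omega> t ` {2..M}) < T_loc_t M \<omega> t 1} \<in> sets (focus_space mu)" for t
    using borel_measurable_less[OF _ measurable_T_loc_t] by fastforce
  then have "(\<Inter>t\<in>{n<..}. {\<omega>. Max (T_loc_t M \<omega> t ` {2..M}) < T_loc_t M \<omega> t 1}) \<in> sets (focus_space mu)"
    by (intro sets.countable_INT'') auto
  then show ?thesis
    by (rule back_subst) (auto simp: stream1_leads_after_def)
qed

lemma measurable_t0 [measurable]: "t0 M \<in> borel_measurable (focus_space mu)"
proof -
  have "(\<lambda>\<omega>. stream1_leads_after M \<omega> n) \<in> focus_space mu \<rightarrow>\<^sub>M count_space UNIV" for n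
    using sets_stream1_leads_after by (simp add: Measurable.pred_def)
  then have "(\<lambda>\<omega>. LEAST n. stream1_leads_after M \<omega> n) \<in> focus_space mu \<rightarrow>\<^sub>M count_space UNIV"
    by (rule measurable_Least)
  moreover have "{\<omega>. \<exists>n. stream1_leads_after M \<omega> n} \<in> sets (focus_space mu)"
    using sets_stream1_leads_after by (auto simp: Collect_ex_eq)
  ultimately show ?thesis
    unfolding t0_def[abs_def]
    by (intro measurable_If measurable_compose_count_space_UNIV[where g=of_nat]) simp_all
qed

lemma Ncount_Nil [simp]: "Ncount [] m = 0"
  by (simp add: Ncount_def)

lemma Ncount_snoc [simp]: "Ncount (h @ [x]) m = Ncount h m + (if x = m then 1 else 0)"
  by (simp add: Ncount_def)

lemma length_hist [simp]: "length (hist M \<omega> t) = t"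
  by (induction t) simp_all

lemma take_hist: "s \<le> t \<Longrightarrow> take s (hist M \<omega> t) = hist M \<omega> s"
proof (induction t)
  case (Suc t)
  show ?case
  proof (cases "s = Suc t")
    case True
    then show ?thesis
      by (metis length_hist order_refl take_all)
  next
    case False
    then show ?thesis
      using Suc by simp
  qed
qed simp

lemma Tloc_nonneg: "0 \<le> Tloc \<omega> h m"
proof (cases "Ncount h m = 0")
  case False
  then have "glr_val \<omega> m (Ncount h m) 0 \<le> Max (glr_val \<omega> m (Ncount h m) ` {0..<Ncount h m})"
    by (intro Max_ge) auto
  moreover have "0 \<le> glr_val \<omega> m (Ncount h m) 0"
    by (simp add: glr_val_def)
  ultimately have "0 \<le> Max (glr_val \<omega> m (Ncount h m) ` {0..<Ncount h m})"
    by linarith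
  then show ?thesis
    using False by (simp add: Tloc_def Let_def)
qed (simp add: Tloc_def)

lemma khat_less_Ncount:
  assumes "Ncount h m \<noteq> 0"
  shows "khat \<omega> h m < Ncount h m"
proof -
  let ?N = "Ncount h m"
  have "Max (glr_val \<omega> m ?N ` {0..<?N}) \<in> glr_val \<omega> m ?N ` {0..<?N}"
    using assms by (intro Max_in) auto
  then obtain k where "k < ?N" "glr_val \<omega> m ?N k = Max (glr_val \<omega> m ?N ` {0..<?N})"
    by force
  then have "k < ?N \<and> glr_val \<omega> m ?N k = Tloc \<omega> h m"
    using assms by (simp add: Tloc_def Let_def)
  then have "(LEAST k. k < ?N \<and> glr_val \<omega> m ?N k = Tloc \<omega> h m) < ?N"
    by (rule LeastI2) simp
  then show ?thesis
    using assms by (simp add: khat_def Let_def)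
qed

lemma khat_Ncount_0: "Ncount h m = 0 \<Longrightarrow> khat \<omega> h m = 0"
  by (simp add: khat_def)

lemma khat_cong_Ncount: "Ncount h m = Ncount h' m \<Longrightarrow> khat \<omega> h m = khat \<omega> h' m"
  by (simp add: khat_def Tloc_def Let_def)

definition obs_times :: "nat list \<Rightarrow> nat \<Rightarrow> nat list" where
  "obs_times h m = filter (\<lambda>j. h ! (j - 1) = m) [1..<length h + 1]"

lemma obs_times_snoc:
  "obs_times (h @ [x]) m = obs_times h m @ (if x = m then [length h + 1] else [])"
proof -
  have "filter (\<lambda>j. (h @ [x]) ! (j - 1) = m) [1..<length h + 1] = filter (\<lambda>j. h ! (j - 1) = m) [1..<length h + 1]"
    by (rule filter_cong) (auto simp: nth_append)
  then show ?thesis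
    by (simp add: obs_times_def)
qed

lemma obs_times_nth:
  "length (obs_times h m) = Ncount h m \<and>
   (\<forall>k. 1 \<le> k \<and> k \<le> Ncount h m \<longrightarrow>
      1 \<le> obs_times h m ! (k - 1) \<and> obs_times h m ! (k - 1) \<le> length h \<and>
      Ncount (take (obs_times h m ! (k - 1)) h) m = k \<and> h ! (obs_times h m ! (k - 1) - 1) = m)"
proof (induction h rule: rev_induct)
  case Nil
  then show ?case by (simp add: obs_times_def)
next
  case (snoc x h)
  then have length: "length (obs_times h m) = Ncount h m"
    by blast
  have "1 \<le> obs_times (h @ [x]) m ! (k - 1) \<and> obs_times (h @ [x]) m ! (k - 1) \<le> length (h @ [x]) \<and>
      Ncount (take (obs_times (h @ [x]) m ! (k - 1)) (h @ [x])) m = k \<and>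
      (h @ [x]) ! (obs_times (h @ [x]) m ! (k - 1) - 1) = m"
    if k: "1 \<le> k" "k \<le> Ncount (h @ [x]) m" for k
  proof (cases "k \<le> Ncount h m")
    case True
    then have "k - 1 < length (obs_times h m)"
      using k length by linarith
    then have "obs_times (h @ [x]) m ! (k - 1) = obs_times h m ! (k - 1)"
      by (simp add: obs_times_snoc nth_append)
    then show ?thesis
      using snoc.IH True k by (auto simp: nth_append)
  next
    case False
    with k have "x = m" "k = Ncount h m + 1"
      by (auto split: if_splits)
    then show ?thesis
      using length by (simp add: obs_times_snoc nth_append)
  qed
  then show ?case
    using length by (simp add: obs_times_snoc)
qed

lemma obs_time_in_hist:
  assumes "1 \<le> k" "k \<le> Ncount h m"
  shows "1 \<le> obs_time h m k" and "obs_time h m k \<le> length h"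
    and "Ncount (take (obs_time h m k) h) m = k" and "h ! (obs_time h m k - 1) = m"
  using obs_times_nth[of h m] assms unfolding obs_time_def obs_times_def[symmetric] by blast+

lemma nuhat_loc_le_length: "nuhat_loc \<omega> h m \<le> length h"
proof (cases "khat \<omega> h m = 0")
  case False
  then have "khat \<omega> h m < Ncount h m"
    by (metis khat_Ncount_0 khat_less_Ncount)
  then show ?thesis
    using False obs_time_in_hist(2)[of "khat \<omega> h m" h m] by (simp add: nuhat_loc_def Let_def)
qed (simp add: nuhat_loc_def)

lemma nuhat_t_le: "nuhat_t M \<omega> t \<le> t"
  using nuhat_loc_le_length[of \<omega> "hist M \<omega> t"] by (simp add: nuhat_t_def nuhat_glob_def)

abbreviation N1 :: "nat \<Rightarrow> (coord \<Rightarrow> real) \<Rightarrow> nat \<Rightarrow> nat" where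
  "N1 M \<omega> t \<equiv> Ncount (hist M \<omega> t) 1"

abbreviation next_select :: "nat \<Rightarrow> (coord \<Rightarrow> real) \<Rightarrow> nat \<Rightarrow> nat" where
  "next_select M \<omega> t \<equiv> select M \<omega> (hist M \<omega> t) (Suc t)"

lemma N1_mono: "s \<le> t \<Longrightarrow> N1 M \<omega> s \<le> N1 M \<omega> t"
  by (induction t rule: dec_induct) (auto simp del: hist.simps simp: hist.simps(2) intro: le_trans)

lemma N1_add_card_other:
  assumes "a \<le> b"
  shows "N1 M \<omega> b + card {j \<in> {a..<b}. next_select M \<omega> j \<noteq> 1} = N1 M \<omega> a + (b - a)"
  using assms
proof (induction b rule: dec_induct)
  case (step b)
  have "{j \<in> {a..<Suc b}. next_select M \<omega> j \<noteq> 1}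
          = {j \<in> {a..<b}. next_select M \<omega> j \<noteq> 1} \<union> (if next_select M \<omega> b \<noteq> 1 then {b} else {})"
    using step.hyps by (auto simp: less_Suc_eq)
  then have "card {j \<in> {a..<Suc b}. next_select M \<omega> j \<noteq> 1}
               = card {j \<in> {a..<b}. next_select M \<omega> j \<noteq> 1} + (if next_select M \<omega> b \<noteq> 1 then 1 else 0)"
    by (simp add: card_insert_if)
  then show ?case
    using step.IH step.hyps(1) by (simp; arith)
qed simp

lemma hist_obs_time:
  assumes k: "1 \<le> k" "k \<le> N1 M \<omega> t"
  defines "s \<equiv> obs_time (hist M \<omega> t) 1 k"
  shows "s \<le> t" and "N1 M \<omega> s = k" and "\<And>j. j < s \<Longrightarrow> N1 M \<omega> j < k"
proof -
  note s = obs_time_in_hist[OF k, folded s_def]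
  show "s \<le> t"
    using s(2) by simp
  then have take_s: "take s (hist M \<omega> t) = hist M \<omega> s"
    by (rule take_hist)
  then show N1_s: "N1 M \<omega> s = k"
    using s(3) by simp
  have "hist M \<omega> s = hist M \<omega> (s - 1) @ [next_select M \<omega> (s - 1)]"
    using s(1) hist.simps(2)[of M \<omega> "s - 1"] by simp
  moreover have "hist M \<omega> s ! (s - 1) = 1"
    using s(1,4) take_s[symmetric] by simp
  ultimately have "N1 M \<omega> (s - 1) = k - 1"
    using N1_s by (simp add: nth_append)
  moreover have "N1 M \<omega> j \<le> N1 M \<omega> (s - 1)" if "j < s" for j
    using that by (intro N1_mono) simp
  ultimately show "N1 M \<omega> j < k" if "j < s" for j
    using that k(1) by fastforce
qed

section \<open>The single-stream run\<close>

lemma Mt_single: "Mt (Suc 0) \<omega> h t = Suc 0"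
proof -
  have "{m \<in> {1..Suc 0}. Tloc \<omega> h m = Tglob (Suc 0) \<omega> h} = {1}"
    by (auto simp: Tglob_def)
  then show ?thesis by (simp add: Mt_def pick_unif_def)
qed

lemma hist_single: "hist (Suc 0) \<omega> t = replicate t (Suc 0)"
  by (induction t) (simp_all add: select_def Mt_single replicate_append_same)

lemma obs_time_replicate:
  assumes "0 < k" "k \<le> N"
  shows "obs_time (replicate N m) m k = k"
proof -
  have "filter (\<lambda>j. replicate N m ! (j - 1) = m) [1..<N + 1] = [1..<N + 1]"
    by (rule filter_True) auto
  moreover have "[1..<N + 1] ! (k - 1) = k"
    using assms by (subst nth_upt) auto
  ultimately show ?thesis
    by (simp only: obs_time_def length_replicate)
qed

text \<open>The single-stream run reads the same observations \<open>Obs 1 i\<close> as stream 1 of the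
  \<open>M\<close>-stream run; this is the coupling of the two runs.\<close>
lemma khat_eq_nuhat_t_single: "khat \<omega> h 1 = nuhat_t 1 \<omega> (Ncount h 1)"
proof -
  let ?N = "Ncount h 1" and ?k = "khat \<omega> h 1"
  have "?k = khat \<omega> (replicate ?N 1) 1"
    by (rule khat_cong_Ncount) (simp add: Ncount_def)
  then have "nuhat_t 1 \<omega> ?N = (if ?k = 0 then 0 else obs_time (replicate ?N 1) 1 ?k)"
    by (simp add: nuhat_t_def nuhat_glob_def Mt_single hist_single nuhat_loc_def Let_def)
  also have "\<dots> = ?k"
  proof (cases "?k = 0")
    case False
    then have "?k < ?N"
      by (metis khat_Ncount_0 khat_less_Ncount)
    then show ?thesis
      using False obs_time_replicate[of ?k ?N 1] by simp
  qed simp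
  finally show ?thesis ..
qed

definition nuhat_sup_single :: "(coord \<Rightarrow> real) \<Rightarrow> ennreal" where
  "nuhat_sup_single \<omega> = (SUP t. ennreal (real (nuhat_t 1 \<omega> t)))"

lemma khat_le_nuhat_sup_single: "of_nat (khat \<omega> h 1) \<le> nuhat_sup_single \<omega>"
proof -
  have "ennreal (real (nuhat_t 1 \<omega> (Ncount h 1))) \<le> nuhat_sup_single \<omega>"
    unfolding nuhat_sup_single_def by (rule SUP_upper) simp
  then show ?thesis
    unfolding khat_eq_nuhat_t_single by (simp only: ennreal_of_nat_eq_real_of_nat)
qed

lemma Suc_le_nuhat_sup_single:
  assumes "of_nat n < nuhat_sup_single \<omega>"
  shows "of_nat (Suc n) \<le> nuhat_sup_single \<omega>"
proof -
  obtain t where "ennreal (real n) < ennreal (real (nuhat_t 1 \<omega> t))"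
    using assms by (auto simp: nuhat_sup_single_def less_SUP_iff ennreal_of_nat_eq_real_of_nat)
  then have "Suc n \<le> nuhat_t 1 \<omega> t"
    by (simp add: ennreal_less_iff)
  then have "of_nat (Suc n) \<le> (of_nat (nuhat_t 1 \<omega> t) :: ennreal)"
    by (simp only: of_nat_le_iff)
  also have "\<dots> = ennreal (real (nuhat_t 1 \<omega> t))"
    by (rule ennreal_of_nat_eq_real_of_nat)
  also have "\<dots> \<le> nuhat_sup_single \<omega>"
    unfolding nuhat_sup_single_def by (rule SUP_upper) simp
  finally show ?thesis .
qed

lemma measurable_nuhat_sup_single [measurable]: "nuhat_sup_single \<in> borel_measurable (focus_space mu)"
  unfolding nuhat_sup_single_def[abs_def]
  by (intro borel_measurable_SUP measurable_compose_count_space_UNIV[OF measurable_nuhat_t]) simp_all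

lemma Mt_eq_1_if_leads:
  assumes M: "2 \<le> M" and lead: "Max (Tloc \<omega> h ` {2..M}) < Tloc \<omega> h 1"
  shows "Mt M \<omega> h t = 1"
proof -
  have others_le: "Tloc \<omega> h m \<le> Max (Tloc \<omega> h ` {2..M})" if "m \<in> {2..M}" for m
    using that by (intro Max_ge) auto
  have "{1..M} = insert 1 {2..M}"
    using M by auto
  then have glob: "Tglob M \<omega> h = Tloc \<omega> h 1"
    using lead M by (simp add: Tglob_def Max_insert)
  have "{m \<in> {1..M}. Tloc \<omega> h m = Tglob M \<omega> h} = {1}"
  proof (intro equalityI subsetI)
    fix m
    assume m: "m \<in> {m \<in> {1..M}. Tloc \<omega> h m = Tglob M \<omega> h}"
    show "m \<in> {1}"
    proof (rule ccontr)
      assume "m \<notin> {1}"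
      with m have "Tloc \<omega> h m \<le> Max (Tloc \<omega> h ` {2..M})"
        by (intro others_le) auto
      moreover have "Tloc \<omega> h m = Tloc \<omega> h 1"
        using m glob by simp
      ultimately show False
        using lead by linarith
    qed
  qed (use M glob in auto)
  then show ?thesis
    by (simp add: Mt_def pick_unif_def)
qed

lemma stream1_leads_after_Mt:
  assumes "2 \<le> M" and "stream1_leads_after M \<omega> n" and "n < t"
  shows "Mt M \<omega> (hist M \<omega> t) t' = 1"
  using assms by (intro Mt_eq_1_if_leads) (auto simp: stream1_leads_after_def T_loc_t_def)

lemma stream1_leads_after_N1_pos:
  assumes M: "2 \<le> M" and lead: "stream1_leads_after M \<omega> n" and "n < t"
  shows "0 < N1 M \<omega> t"
proof -
  have "Tloc \<omega> (hist M \<omega> t) 2 \<le> Max (Tloc \<omega> (hist M \<omega> t) ` {2..M})"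
    using M by (intro Max_ge) auto
  then have "0 < Tloc \<omega> (hist M \<omega> t) 1"
    using lead \<open>n < t\<close> Tloc_nonneg[of \<omega> "hist M \<omega> t" 2]
    by (auto simp: stream1_leads_after_def T_loc_t_def)
  then show ?thesis
    by (rule contrapos_pp) (simp add: Tloc_def)
qed

lemma nuhat_t_after_lead:
  assumes "2 \<le> M" and "stream1_leads_after M \<omega> n" and "n < t"
  shows "nuhat_t M \<omega> t = nuhat_loc \<omega> (hist M \<omega> t) 1"
  using stream1_leads_after_Mt[OF assms] by (simp add: nuhat_t_def nuhat_glob_def)

section \<open>Exploration steps\<close>

lemma select_eq_1_if_explore:
  assumes "1 \<le> M" and "\<omega> (Gc t) < eps M t (nuhat_glob M \<omega> h (t - 1))" and "\<omega> (Uc t) < 1 / real M"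
  shows "select M \<omega> h t = 1"
proof -
  have "\<omega> (Uc t) * real M < 1"
    using assms by (simp add: less_divide_eq mult.commute)
  then show ?thesis
    using assms(2) by (simp add: select_def)
qed

lemma explore_if_select_ne_Mt:
  assumes "1 \<le> M" and "select M \<omega> h t \<noteq> 1" and "Mt M \<omega> h (t - 1) = 1"
  shows "\<omega> (Gc t) < eps M t (nuhat_glob M \<omega> h (t - 1))" and "1 / real M \<le> \<omega> (Uc t)"
proof -
  show explore: "\<omega> (Gc t) < eps M t (nuhat_glob M \<omega> h (t - 1))"
    using assms(2,3) by (auto simp: select_def split: if_splits)
  then have "nat \<lfloor>\<omega> (Uc t) * real M\<rfloor> \<noteq> 0"
    using assms(2) by (auto simp: select_def)
  then have "1 \<le> \<omega> (Uc t) * real M"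
    by linarith
  then show "1 / real M \<le> \<omega> (Uc t)"
    using assms(1) by (simp add: divide_le_eq mult.commute)
qed

text \<open>This event does not involve the uniform draw \<open>Uc (Suc j)\<close>, which sends an exploration
  step to stream 1 with probability \<open>1 / M\<close>.\<close>
definition early_exploration :: "nat \<Rightarrow> nat \<Rightarrow> (coord \<Rightarrow> real) set" where
  "early_exploration M j = {\<omega>. ennreal (real (N1 M \<omega> j)) < nuhat_sup_single \<omega> \<and>
                              \<omega> (Gc (Suc j)) < eps M (Suc j) (nuhat_glob M \<omega> (hist M \<omega> j) j)}"

definition explored_other :: "nat \<Rightarrow> (coord \<Rightarrow> real) \<Rightarrow> nat \<Rightarrow> ennreal" where
  "explored_other M \<omega> j = indicator (early_exploration M j) \<omega> * indicator {1 / real M..} (\<omega> (Uc (Suc j)))"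

definition explored_first :: "nat \<Rightarrow> (coord \<Rightarrow> real) \<Rightarrow> nat \<Rightarrow> ennreal" where
  "explored_first M \<omega> j = indicator (early_exploration M j) \<omega> * indicator {..<1 / real M} (\<omega> (Uc (Suc j)))"

lemma explored_other_eq_1:
  assumes M: "2 \<le> M" and lead: "stream1_leads_after M \<omega> n" and "n < j"
    and other: "next_select M \<omega> j \<noteq> 1" and early: "of_nat (N1 M \<omega> j) < nuhat_sup_single \<omega>"
  shows "explored_other M \<omega> j = 1"
proof -
  have "Mt M \<omega> (hist M \<omega> j) j = 1"
    using stream1_leads_after_Mt[OF M lead \<open>n < j\<close>] .
  then have "\<omega> (Gc (Suc j)) < eps M (Suc j) (nuhat_glob M \<omega> (hist M \<omega> j) j)"
    and "1 / real M \<le> \<omega> (Uc (Suc j))"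
    using explore_if_select_ne_Mt[of M \<omega> "hist M \<omega> j" "Suc j"] M other by auto
  then show ?thesis
    using early by (simp add: explored_other_def early_exploration_def ennreal_of_nat_eq_real_of_nat)
qed

lemma obs_time_le_lead_time:
  assumes M: "2 \<le> M" and lead: "stream1_leads_after M \<omega> n" and k: "1 \<le> k" "k \<le> N1 M \<omega> t"
  defines "s \<equiv> obs_time (hist M \<omega> t) 1 k"
  shows "s \<le> n + k + card {j \<in> {Suc n..<s}. next_select M \<omega> j \<noteq> 1}"
proof (cases "s \<le> Suc n")
  case False
  then have "N1 M \<omega> s + card {j \<in> {Suc n..<s}. next_select M \<omega> j \<noteq> 1} = N1 M \<omega> (Suc n) + (s - Suc n)"
    by (intro N1_add_card_other) simp
  moreover have "0 < N1 M \<omega> (Suc n)"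
    by (rule stream1_leads_after_N1_pos[OF M lead]) simp
  ultimately show ?thesis
    using hist_obs_time(2)[OF k] False unfolding s_def by linarith
qed (use k in linarith)

lemma card_select_other_le_explored_other:
  assumes M: "2 \<le> M" and lead: "stream1_leads_after M \<omega> n"
    and early: "\<And>j. j < s \<Longrightarrow> of_nat (N1 M \<omega> j) < nuhat_sup_single \<omega>"
  shows "of_nat (card {j \<in> {Suc n..<s}. next_select M \<omega> j \<noteq> 1}) \<le> (\<Sum>j. explored_other M \<omega> j)"
proof -
  have "of_nat (card {j \<in> {Suc n..<s}. next_select M \<omega> j \<noteq> 1})
          = (\<Sum>j\<in>{j \<in> {Suc n..<s}. next_select M \<omega> j \<noteq> 1}. 1 :: ennreal)"
    by simp
  also have "\<dots> = (\<Sum>j\<in>{j \<in> {Suc n..<s}. next_select M \<omega> j \<noteq> 1}. explored_other M \<omega> j)"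
    using early by (intro sum.cong refl explored_other_eq_1[OF M lead, symmetric]) auto
  also have "\<dots> \<le> (\<Sum>j. explored_other M \<omega> j)"
    by (intro sum_le_suminf) auto
  finally show ?thesis .
qed

lemma nuhat_t_le_explored_other:
  assumes M: "2 \<le> M" and lead: "stream1_leads_after M \<omega> n"
  shows "ennreal (real (nuhat_t M \<omega> t)) \<le> of_nat n + nuhat_sup_single \<omega> + (\<Sum>j. explored_other M \<omega> j)"
proof (cases "n < t \<and> khat \<omega> (hist M \<omega> t) 1 \<noteq> 0")
  case False
  then have "nuhat_t M \<omega> t \<le> n"
    using nuhat_t_le[of M \<omega> t] nuhat_t_after_lead[OF M lead, of t]
    by (cases "n < t") (auto simp: nuhat_loc_def)
  then have "ennreal (real (nuhat_t M \<omega> t)) \<le> of_nat n"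
    by (simp add: ennreal_of_nat_eq_real_of_nat)
  then show ?thesis
    by (simp add: add.assoc add_increasing2)
next
  case True
  define k where "k = khat \<omega> (hist M \<omega> t) 1"
  define s where "s = obs_time (hist M \<omega> t) 1 k"
  define C where "C = card {j \<in> {Suc n..<s}. next_select M \<omega> j \<noteq> 1}"
  have "k < N1 M \<omega> t"
    using True unfolding k_def by (metis khat_Ncount_0 khat_less_Ncount)
  then have k: "1 \<le> k" "k \<le> N1 M \<omega> t"
    using True by (simp_all add: k_def)
  have k_le: "of_nat k \<le> nuhat_sup_single \<omega>"
    unfolding k_def by (rule khat_le_nuhat_sup_single)
  have "nuhat_t M \<omega> t = s"
    using True nuhat_t_after_lead[OF M lead] by (simp add: nuhat_loc_def s_def k_def)
  also have "s \<le> n + k + C"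
    unfolding s_def C_def by (rule obs_time_le_lead_time[OF M lead k])
  finally have "ennreal (real (nuhat_t M \<omega> t)) \<le> of_nat n + of_nat k + of_nat C"
    by (simp only: of_nat_le_iff flip: of_nat_add ennreal_of_nat_eq_real_of_nat)
  also have "\<dots> \<le> of_nat n + nuhat_sup_single \<omega> + (\<Sum>j. explored_other M \<omega> j)"
  proof (intro add_mono order_refl k_le)
    have "of_nat (N1 M \<omega> j) < nuhat_sup_single \<omega>" if "j < s" for j
      using hist_obs_time(3)[OF k that[unfolded s_def]] k_le
      by (metis of_nat_less_iff order_less_le_trans)
    then show "of_nat C \<le> (\<Sum>j. explored_other M \<omega> j)"
      unfolding C_def by (rule card_select_other_le_explored_other[OF M lead])
  qed
  finally show ?thesis .
qed

lemma nuhat_max_le: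
  assumes "2 \<le> M"
  shows "nuhat_max M lam \<omega> \<le> t0 M \<omega> + nuhat_sup_single \<omega> + (\<Sum>j. explored_other M \<omega> j)"
proof (cases "\<exists>n. stream1_leads_after M \<omega> n")
  case True
  then have "stream1_leads_after M \<omega> (LEAST n. stream1_leads_after M \<omega> n)"
    by (rule LeastI_ex)
  then show ?thesis
    using True unfolding nuhat_max_def t0_def
    by (intro SUP_least) (simp add: nuhat_t_le_explored_other[OF assms])
qed (simp add: t0_def)

lemma suminf_explored_first_le:
  assumes "1 \<le> M"
  shows "(\<Sum>j. explored_first M \<omega> j) \<le> nuhat_sup_single \<omega>"
proof (rule suminf_le_const)
  have "(\<Sum>j<m. explored_first M \<omega> j) \<le> of_nat (N1 M \<omega> m) \<and>
        (\<Sum>j<m. explored_first M \<omega> j) \<le> nuhat_sup_single \<omega>" for m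
  proof (induction m)
    case (Suc m)
    show ?case
    proof (cases "\<omega> \<in> early_exploration M m \<and> \<omega> (Uc (Suc m)) < 1 / real M")
      case True
      then have "next_select M \<omega> m = 1"
        using assms by (intro select_eq_1_if_explore) (auto simp: early_exploration_def)
      then have N1_Suc: "N1 M \<omega> (Suc m) = Suc (N1 M \<omega> m)"
        by simp
      have sup_bound: "of_nat (Suc (N1 M \<omega> m)) \<le> nuhat_sup_single \<omega>"
        using True by (intro Suc_le_nuhat_sup_single) (simp add: early_exploration_def ennreal_of_nat_eq_real_of_nat)
      have sum_Suc: "(\<Sum>j<Suc m. explored_first M \<omega> j) = (\<Sum>j<m. explored_first M \<omega> j) + 1"
        using True by (simp add: explored_first_def)
      have "(\<Sum>j<m. explored_first M \<omega> j) + 1 \<le> of_nat (Suc (N1 M \<omega> m))"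
        using add_right_mono[OF conjunct1[OF Suc.IH], of 1] by (simp add: add.commute)
      then show ?thesis
        unfolding sum_Suc N1_Suc using sup_bound by (blast intro: order_trans)
    next
      case False
      then show ?thesis
        using Suc.IH N1_mono[of m "Suc m" M \<omega>] by (auto simp: explored_first_def intro: order_trans)
    qed
  qed simp
  then show "sum (explored_first M \<omega>) {..<m} \<le> nuhat_sup_single \<omega>" for m
    by blast
qed simp

section \<open>Independence of the uniform stream choice\<close>

lemma measurable_PiM_fun_upd_pair:
  "(\<lambda>(x, X). X(c := x)) \<in> M c \<Otimes>\<^sub>M (\<Pi>\<^sub>M i\<in>UNIV - {c}. M i) \<rightarrow>\<^sub>M (\<Pi>\<^sub>M i\<in>UNIV. M i)"
  using measurable_fun_upd[where J="UNIV - {c}" and I=UNIV and N="M c \<Otimes>\<^sub>M (\<Pi>\<^sub>M i\<in>UNIV - {c}. M i)"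
                                 and i=c and M=M]
  by (simp add: case_prod_beta')

lemma nn_integral_PiM_fun_upd:
  fixes M :: "'i \<Rightarrow> 'a measure"
  assumes prob: "\<And>i. prob_space (M i)" and F: "F \<in> borel_measurable (\<Pi>\<^sub>M i\<in>UNIV. M i)"
  shows "(\<integral>\<^sup>+\<omega>. F \<omega> \<partial>(\<Pi>\<^sub>M i\<in>UNIV. M i))
       = (\<integral>\<^sup>+X. (\<integral>\<^sup>+x. F (X(c := x)) \<partial>M c) \<partial>(\<Pi>\<^sub>M i\<in>UNIV - {c}. M i))"
proof -
  let ?P = "\<Pi>\<^sub>M i\<in>UNIV. M i" and ?Q = "\<Pi>\<^sub>M i\<in>UNIV - {c}. M i"
  interpret Mc: prob_space "M c" by (rule prob)
  interpret Q: prob_space ?Q by (rule prob_space_PiM) (rule prob)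
  interpret pair_sigma_finite "M c" ?Q ..
  have "distr (M c \<Otimes>\<^sub>M ?Q) ?P (\<lambda>(x, X). X(c := x)) = ?P"
    using distr_pair_PiM_eq_PiM[of "UNIV - {c}" M c] prob by (simp add: insert_absorb)
  then have "(\<integral>\<^sup>+\<omega>. F \<omega> \<partial>?P) = (\<integral>\<^sup>+\<omega>. F \<omega> \<partial>distr (M c \<Otimes>\<^sub>M ?Q) ?P (\<lambda>(x, X). X(c := x)))"
    by simp
  also have "\<dots> = (\<integral>\<^sup>+p. F ((\<lambda>(x, X). X(c := x)) p) \<partial>(M c \<Otimes>\<^sub>M ?Q))"
    by (rule nn_integral_distr[OF measurable_PiM_fun_upd_pair]) (simp add: F)
  also have "\<dots> = (\<integral>\<^sup>+X. (\<integral>\<^sup>+x. F (X(c := x)) \<partial>M c) \<partial>?Q)"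
    by (subst nn_integral_snd[symmetric]) (auto intro: measurable_compose[OF measurable_PiM_fun_upd_pair F])
  finally show ?thesis .
qed

lemma nn_integral_PiM_mult_coordinate:
  fixes M :: "'i \<Rightarrow> 'a measure" and f :: "('i \<Rightarrow> 'a) \<Rightarrow> ennreal" and g :: "'a \<Rightarrow> ennreal"
  assumes prob: "\<And>i. prob_space (M i)"
    and f: "f \<in> borel_measurable (\<Pi>\<^sub>M i\<in>UNIV. M i)" and g: "g \<in> borel_measurable (M c)"
    and f_upd: "\<And>X x. f (X(c := x)) = f X"
  shows "(\<integral>\<^sup>+\<omega>. f \<omega> * g (\<omega> c) \<partial>(\<Pi>\<^sub>M i\<in>UNIV. M i))
       = (\<integral>\<^sup>+\<omega>. f \<omega> \<partial>(\<Pi>\<^sub>M i\<in>UNIV. M i)) * (\<integral>\<^sup>+x. g x \<partial>M c)"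
proof -
  let ?P = "\<Pi>\<^sub>M i\<in>UNIV. M i" and ?Q = "\<Pi>\<^sub>M i\<in>UNIV - {c}. M i"
  interpret Mc: prob_space "M c" by (rule prob)
  define f' where "f' X = (\<integral>\<^sup>+y. f (X(c := y)) \<partial>M c)" for X
  have f'_eq: "f' X = f (X(c := x))" for X x
  proof -
    have "f (X(c := y)) = f (X(c := x))" for y
      using f_upd[of "X(c := x)" y] by simp
    then have "f' X = (\<integral>\<^sup>+y. f (X(c := x)) \<partial>M c)"
      unfolding f'_def by (intro nn_integral_cong) simp
    then show ?thesis by (simp add: Mc.emeasure_space_1)
  qed
  have "(\<lambda>p. f ((\<lambda>(x, X). X(c := x)) p)) \<in> borel_measurable (M c \<Otimes>\<^sub>M ?Q)"
    by (rule measurable_compose[OF measurable_PiM_fun_upd_pair f])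
  then have "(\<lambda>(X, y). f (X(c := y))) \<in> borel_measurable (?Q \<Otimes>\<^sub>M M c)"
    by (subst measurable_pair_swap_iff) (simp add: case_prod_beta')
  then have f'_measurable: "f' \<in> borel_measurable ?Q"
    unfolding f'_def by (rule Mc.borel_measurable_nn_integral)
  have fg: "(\<lambda>\<omega>. f \<omega> * g (\<omega> c)) \<in> borel_measurable ?P"
    using f measurable_compose[OF measurable_component_singleton[of c UNIV M] g]
    by (intro borel_measurable_times_ennreal) auto
  have "(\<integral>\<^sup>+\<omega>. f \<omega> * g (\<omega> c) \<partial>?P) = (\<integral>\<^sup>+X. (\<integral>\<^sup>+x. f' X * g x \<partial>M c) \<partial>?Q)"
    by (subst nn_integral_PiM_fun_upd[OF prob fg, where c=c]) (simp flip: f'_eq)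
  also have "\<dots> = (\<integral>\<^sup>+X. f' X \<partial>?Q) * (\<integral>\<^sup>+x. g x \<partial>M c)"
    by (simp add: nn_integral_cmult g nn_integral_multc f'_measurable)
  also have "(\<integral>\<^sup>+X. f' X \<partial>?Q) = (\<integral>\<^sup>+\<omega>. f \<omega> \<partial>?P)"
    by (simp add: nn_integral_PiM_fun_upd[OF prob f, where c=c] Mc.emeasure_space_1 flip: f'_eq)
  finally show ?thesis .
qed

lemma glr_val_fun_upd_Uc: "glr_val (fun_upd \<omega> (Uc i) x) = glr_val \<omega>"
  by (simp add: glr_val_def fun_eq_iff)

lemma Tloc_fun_upd_Uc: "Tloc (fun_upd \<omega> (Uc i) x) h m = Tloc \<omega> h m"
  by (simp add: Tloc_def glr_val_fun_upd_Uc Let_def)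

lemma khat_fun_upd_Uc: "khat (fun_upd \<omega> (Uc i) x) h m = khat \<omega> h m"
  by (simp add: khat_def Tloc_fun_upd_Uc glr_val_fun_upd_Uc Let_def)

lemma Mt_fun_upd_Uc: "Mt M (fun_upd \<omega> (Uc i) x) h t = Mt M \<omega> h t"
  by (simp add: Mt_def Tglob_def Tloc_fun_upd_Uc)

lemma nuhat_glob_fun_upd_Uc: "nuhat_glob M (fun_upd \<omega> (Uc i) x) h t = nuhat_glob M \<omega> h t"
  by (simp add: nuhat_glob_def nuhat_loc_def Mt_fun_upd_Uc khat_fun_upd_Uc)

lemma select_fun_upd_Uc: "t \<noteq> i \<Longrightarrow> select M (fun_upd \<omega> (Uc i) x) h t = select M \<omega> h t"
  by (simp add: select_def nuhat_glob_fun_upd_Uc Mt_fun_upd_Uc)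

lemma hist_fun_upd_Uc: "t < i \<Longrightarrow> hist M (fun_upd \<omega> (Uc i) x) t = hist M \<omega> t"
  by (induction t) (simp_all add: select_fun_upd_Uc)

lemma nuhat_sup_single_fun_upd_Uc: "nuhat_sup_single (fun_upd \<omega> (Uc i) x) = nuhat_sup_single \<omega>"
  by (simp add: nuhat_sup_single_def nuhat_t_def hist_single nuhat_glob_fun_upd_Uc)

lemma early_exploration_fun_upd_Uc:
  "fun_upd \<omega> (Uc (Suc j)) x \<in> early_exploration M j \<longleftrightarrow> \<omega> \<in> early_exploration M j"
  by (simp add: early_exploration_def hist_fun_upd_Uc nuhat_glob_fun_upd_Uc nuhat_sup_single_fun_upd_Uc)

lemma sets_early_exploration: "early_exploration M j \<in> sets (focus_space mu)"
proof -
  let ?P = "focus_space mu"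
  have N1: "(\<lambda>\<omega>. ennreal (real (N1 M \<omega> j))) \<in> borel_measurable ?P"
    by (rule measurable_compose_count_space_UNIV[OF measurable_hist]) simp
  have "(\<lambda>\<omega>. nuhat_glob M \<omega> (hist M \<omega> j) j) \<in> ?P \<rightarrow>\<^sub>M count_space UNIV"
    by (rule measurable_compose_countable[where g="\<lambda>\<omega>. hist M \<omega> j", OF measurable_nuhat_glob measurable_hist])
  then have eps: "(\<lambda>\<omega>. eps M (Suc j) (nuhat_glob M \<omega> (hist M \<omega> j) j)) \<in> borel_measurable ?P"
    by (rule measurable_compose_count_space_UNIV) simp
  have "{\<omega> \<in> space ?P. ennreal (real (N1 M \<omega> j)) < nuhat_sup_single \<omega>} \<inter>
        {\<omega> \<in> space ?P. \<omega> (Gc (Suc j)) < eps M (Suc j) (nuhat_glob M \<omega> (hist M \<omega> j) j)} \<in> sets ?P"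
    by (intro sets.Int borel_measurable_less N1 eps measurable_nuhat_sup_single measurable_coord)
  then show ?thesis
    by (simp add: early_exploration_def Collect_conj_eq)
qed

lemma emeasure_uniform01_atLeast:
  assumes "0 \<le> a" "a \<le> 1"
  shows "emeasure (uniform_measure lborel {0..1::real}) {a..} = ennreal (1 - a)"
proof -
  have "{0..1} \<inter> {a..} = {a..1}"
    using assms by auto
  then show ?thesis
    using assms by (simp add: divide_ennreal_def)
qed

lemma emeasure_uniform01_lessThan:
  assumes "0 \<le> a" "a \<le> 1"
  shows "emeasure (uniform_measure lborel {0..1::real}) {..<a} = ennreal a"
proof -
  have "{0..1} \<inter> {..<a} = {0..<a}"
    using assms by auto
  then show ?thesis
    using assms by (simp add: divide_ennreal_def)
qed

lemma nn_integral_early_exploration_Uc: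
  assumes "A \<in> sets borel"
  shows "(\<integral>\<^sup>+\<omega>. indicator (early_exploration M j) \<omega> * indicator A (\<omega> (Uc (Suc j))) \<partial>focus_space mu)
       = emeasure (focus_space mu) (early_exploration M j) * emeasure (uniform_measure lborel {0..1}) A"
proof -
  have "(\<integral>\<^sup>+\<omega>. indicator (early_exploration M j) \<omega> * indicator A (\<omega> (Uc (Suc j))) \<partial>focus_space mu)
      = (\<integral>\<^sup>+\<omega>. indicator (early_exploration M j) \<omega> \<partial>focus_space mu)
        * (\<integral>\<^sup>+x. indicator A x \<partial>coord_dist mu (Uc (Suc j)))"
    unfolding focus_space_def
  proof (rule nn_integral_PiM_mult_coordinate[OF prob_space_coord_dist])
    show "indicator (early_exploration M j) \<in> borel_measurable (\<Pi>\<^sub>M c\<in>UNIV. coord_dist mu c)"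
      using sets_early_exploration by (simp add: focus_space_def)
    show "indicator A \<in> borel_measurable (coord_dist mu (Uc (Suc j)))"
      using assms by (simp add: measurable_cong_sets[OF sets_coord_dist refl])
    show "indicator (early_exploration M j) (fun_upd X (Uc (Suc j)) x) = indicator (early_exploration M j) X"
      for X :: "coord \<Rightarrow> real" and x
      by (simp add: indicator_def early_exploration_fun_upd_Uc)
  qed
  then show ?thesis
    using assms sets_early_exploration by (simp add: coord_dist_def)
qed

lemma measurable_explored_other: "(\<lambda>\<omega>. explored_other M \<omega> j) \<in> borel_measurable (focus_space mu)"
  unfolding explored_other_def using sets_early_exploration
  by (auto intro!: borel_measurable_times_ennreal measurable_compose[OF measurable_coord])

lemma measurable_explored_first: "(\<lambda>\<omega>. explored_first M \<omega> j) \<in> borel_measurable (focus_space mu)"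
  unfolding explored_first_def using sets_early_exploration
  by (auto intro!: borel_measurable_times_ennreal measurable_compose[OF measurable_coord])

lemma nn_integral_suminf_explored_other_le:
  assumes "1 \<le> M"
  shows "(\<integral>\<^sup>+\<omega>. (\<Sum>j. explored_other M \<omega> j) \<partial>focus_space mu)
       \<le> of_nat (M - 1) * (\<integral>\<^sup>+\<omega>. nuhat_sup_single \<omega> \<partial>focus_space mu)"
proof -
  let ?P = "focus_space mu"
  have inv_M: "0 \<le> 1 / real M" "1 / real M \<le> 1"
    using assms by simp_all
  have "ennreal (1 - 1 / real M) = of_nat (M - 1) * ennreal (1 / real M)"
    using assms by (simp add: of_nat_diff diff_divide_distrib ennreal_of_nat_eq_real_of_nat flip: ennreal_mult)
  then have other_first: "(\<integral>\<^sup>+\<omega>. explored_other M \<omega> j \<partial>?P) = of_nat (M - 1) * (\<integral>\<^sup>+\<omega>. explored_first M \<omega> j \<partial>?P)"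
    for j
    by (simp add: explored_other_def explored_first_def nn_integral_early_exploration_Uc
                  emeasure_uniform01_atLeast[OF inv_M] emeasure_uniform01_lessThan[OF inv_M] mult_ac)
  have "(\<integral>\<^sup>+\<omega>. (\<Sum>j. explored_other M \<omega> j) \<partial>?P) = (\<Sum>j. \<integral>\<^sup>+\<omega>. explored_other M \<omega> j \<partial>?P)"
    by (rule nn_integral_suminf) (rule measurable_explored_other)
  also have "\<dots> = of_nat (M - 1) * (\<Sum>j. \<integral>\<^sup>+\<omega>. explored_first M \<omega> j \<partial>?P)"
    by (simp add: other_first ennreal_suminf_cmult)
  also have "(\<Sum>j. \<integral>\<^sup>+\<omega>. explored_first M \<omega> j \<partial>?P) = (\<integral>\<^sup>+\<omega>. (\<Sum>j. explored_first M \<omega> j) \<partial>?P)"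
    by (rule nn_integral_suminf[symmetric]) (rule measurable_explored_first)
  also have "\<dots> \<le> (\<integral>\<^sup>+\<omega>. nuhat_sup_single \<omega> \<partial>?P)"
    by (intro nn_integral_mono suminf_explored_first_le assms)
  finally show ?thesis
    by (simp add: mult_left_mono)
qed

theorem proposition2:
  fixes M :: nat and lam mu :: real
  assumes "M > 1" and "lam > 0" and "mu \<noteq> 0"
  shows "(\<integral>\<^sup>+ \<omega>. nuhat_max M lam \<omega> \<partial>focus_space mu)
         \<le> (\<integral>\<^sup>+ \<omega>. t0 M \<omega> \<partial>focus_space mu)
           + of_nat M * (\<integral>\<^sup>+ \<omega>. (SUP t. ennreal (real (nuhat_t 1 \<omega> t))) \<partial>focus_space mu)"
proof -
  let ?P = "focus_space mu"
  let ?K = "\<integral>\<^sup>+\<omega>. nuhat_sup_single \<omega> \<partial>?P"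
  have "(\<integral>\<^sup>+\<omega>. nuhat_max M lam \<omega> \<partial>?P)
      \<le> (\<integral>\<^sup>+\<omega>. t0 M \<omega> + nuhat_sup_single \<omega> + (\<Sum>j. explored_other M \<omega> j) \<partial>?P)"
    using assms(1) by (intro nn_integral_mono nuhat_max_le) simp
  also have "\<dots> = (\<integral>\<^sup>+\<omega>. t0 M \<omega> \<partial>?P) + ?K + (\<integral>\<^sup>+\<omega>. (\<Sum>j. explored_other M \<omega> j) \<partial>?P)"
    using borel_measurable_suminf_order[OF measurable_explored_other]
    by (simp add: nn_integral_add measurable_t0 measurable_nuhat_sup_single)
  also have "\<dots> \<le> (\<integral>\<^sup>+\<omega>. t0 M \<omega> \<partial>?P) + ?K + of_nat (M - 1) * ?K"
    using assms(1) by (intro add_left_mono nn_integral_suminf_explored_other_le) simp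
  also have "\<dots> = (\<integral>\<^sup>+\<omega>. t0 M \<omega> \<partial>?P) + of_nat M * ?K"
  proof -
    have "(of_nat M :: ennreal) = 1 + of_nat (M - 1)"
      using assms(1) of_nat_Suc[of "M - 1"] by simp
    then show ?thesis
      by (simp add: distrib_right add.assoc)
  qed
  finally show ?thesis
    by (simp only: nuhat_sup_single_def)
qed

end
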